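(* Let $V$ be a vertex operator algebra, fix $n\in\mathbb{Z}_+$, and let $u\in V$ have weight $\mathrm{wt}\,u\ge-n$ such that $V^u=\langle u\rangle^1$ satisfies the permutation property. Then for $i_1,\dots,i_{2n}\in\mathbb{N}$, \[ \binom{i_1\mathrm{wt}\,u+n}{n}\sum_{m=0}^n(-1)^m\binom{i_1\mathrm{wt}\,u}{m}\,u_{-2n}^{i_{2n}}u_{-2n+1}^{i_{2n-1}}\cdots u_{-2}^{i_2}u_{-1}^{i_1}\mathbf{1}\ \equiv_n\ u_{-1}^{i_1}\mathbf{1}*_nu_{-2n}^{i_{2n}}u_{-2n+1}^{i_{2n-1}}\cdots u_{-2}^{i_2}\mathbf{1}+w', \] where $w'$ is a linear combination of elements $u_{-2n}^{i'_{2n}}\cdots u_{-1}^{i'_1}\mathbf{1}$ ($i'_j\in\mathbb{N}$) with either $i'_1+\cdots+i'_{2n}<i_1+\cdots+i_{2n}$, or $i'_1+\cdots+i'_{2n}=i_1+\cdots+i_{2n}$ and $i'_1<i_1$. Furthermore, the coefficient on the left-hand side is zero if and only if $0<|i_1\mathrm{wt}\,u|\le n$, and if $i_1\mathrm{wt}\,u>n$ it equals $(-1)^n\binom{i_1\mathrm{wt}\,u+n}{n}\binom{i_1\mathrm{wt}\,u-1}{n}$.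
   Context: $V$ has vacuum $\mathbf{1}$, modes $Y(v,x)=\sum v_kx^{-k-1}$, Virasoro operators $L(m)$, weights $\mathrm{wt}$. For homogeneous $a$: $a\circ_nb=\mathrm{Res}_x(1+x)^{\mathrm{wt}\,a+n}Y(a,x)b\,x^{-2n-2}$, $a*_nb=\sum_{m=0}^n(-1)^m\binom{m+n}{n}\mathrm{Res}_x(1+x)^{\mathrm{wt}\,a+n}Y(a,x)b\,x^{-n-m-1}$. $O_n(V)=\{(L(-1)+L(0))v:v\in V\}+\mathrm{span}\{a\circ_nb\}$; $a\equiv_nb$ means $a-b\in O_n(V)$. $V^u=\langle u\rangle^1$ is the span of all $u_{-k_1}\cdots u_{-k_r}\mathbf{1}$ ($k_i\in\mathbb{Z}_+$), assumed a vertex subalgebra; $F_r(w)$ is the span of $u_{-k_1}\cdots u_{-k_p}w$ with $p\le r$, $k_i\ge1$. $V^u$ satisfies the permutation property if for all $m\in\mathbb{Z}_+$, permutations $\sigma$ of $\{1,\dots,m\}$, $u^{(i)},w\in V^u$ and $k_i\in\mathbb{Z}$: $u^{(1)}_{-k_1}\cdots u^{(m)}_{-k_m}w-u^{(\sigma(1))}_{-k_{\sigma(1)}}\cdots u^{(\sigma(m))}_{-k_{\sigma(m)}}w\in F_{m-1}(w)$. Binomials $\binom{p}{q}=p(p-1)\cdots(p-q+1)/q!$ for $p\in\mathbb{Z}$, $q\in\mathbb{N}$. *)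

theory Defs
  imports Complex_Main "HOL-Combinatorics.Permutations"
begin

text \<open>The modes are given by
  Y a k b = a_k b, so that Y(a,x)b = sum_k a_k b x^(-k-1).\<close>

definition Lop :: "('v \<Rightarrow> int \<Rightarrow> 'v \<Rightarrow> 'v) \<Rightarrow> 'v \<Rightarrow> int \<Rightarrow> 'v \<Rightarrow> 'v" where
  "Lop Y \<omega> m = Y \<omega> (m + 1)"

definition weight_space ::
  "(complex \<Rightarrow> 'v \<Rightarrow> 'v) \<Rightarrow> ('v \<Rightarrow> int \<Rightarrow> 'v \<Rightarrow> 'v) \<Rightarrow> 'v \<Rightarrow> int \<Rightarrow> 'v set" where
  "weight_space sc Y \<omega> n = {v. Lop Y \<omega> 0 v = sc (of_int n) v}"

definition is_VOA ::
  "(complex \<Rightarrow> 'v::ab_group_add \<Rightarrow> 'v) \<Rightarrow> ('v \<Rightarrow> int \<Rightarrow> 'v \<Rightarrow> 'v) \<Rightarrow> 'v \<Rightarrow> 'v \<Rightarrow> complex \<Rightarrow> bool" where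
  "is_VOA sc Y vac \<omega> c \<longleftrightarrow>
     vector_space sc \<and>
     \<comment> \<open>bilinearity of the modes\<close>
     (\<forall>a k. Vector_Spaces.linear sc sc (Y a k)) \<and>
     (\<forall>b k. Vector_Spaces.linear sc sc (\<lambda>a. Y a k b)) \<and>
     \<comment> \<open>truncation\<close>
     (\<forall>a b. \<exists>N. \<forall>k\<ge>N. Y a k b = 0) \<and>
     \<comment> \<open>vacuum axioms\<close>
     (\<forall>k b. Y vac k b = (if k = -1 then b else 0)) \<and>
     (\<forall>a. Y a (-1) vac = a) \<and>
     (\<forall>a k. k \<ge> 0 \<longrightarrow> Y a k vac = 0) \<and>
     \<comment> \<open>Jacobi identity, in component (Borcherds) form; all sums are finite\<close>
     (\<forall>a b c p q r N. (\<forall>i\<ge>N. Y a (r + int i) b = 0 \<and> Y b (q + int i) c = 0 \<and> Y a (p + int i) c = 0) \<longrightarrow>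
        (\<Sum>i<N. sc ((of_int p) gchoose i) (Y (Y a (r + int i) b) (p + q - int i) c)) =
        (\<Sum>i<N. sc ((-1) ^ i * ((of_int r) gchoose i))
            (Y a (p + r - int i) (Y b (q + int i) c) -
             sc ((-1) powi r) (Y b (q + r - int i) (Y a (p + int i) c))))) \<and>
     \<comment> \<open>Virasoro relations with central charge c\<close>
     (\<forall>m n v. Lop Y \<omega> m (Lop Y \<omega> n v) - Lop Y \<omega> n (Lop Y \<omega> m v) =
        sc (of_int (m - n)) (Lop Y \<omega> (m + n) v) +
        sc (if m + n = 0 then (of_int (m ^ 3 - m) / 12) * c else 0) v) \<and>
     \<comment> \<open>L(-1)-derivative property\<close>
     (\<forall>a k b. Y (Lop Y \<omega> (-1) a) k b = sc (- of_int k) (Y a (k - 1) b)) \<and>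
     \<comment> \<open>L(0)-grading: V is the direct sum of the L(0)-eigenspaces V_n (n in Z),
         each finite-dimensional, and V_n = 0 for n sufficiently small\<close>
     module.span sc (\<Union>n. weight_space sc Y \<omega> n) = UNIV \<and>
     (\<forall>n. \<exists>B. finite B \<and> weight_space sc Y \<omega> n \<subseteq> module.span sc B) \<and>
     (\<exists>N. \<forall>n<N. weight_space sc Y \<omega> n = {0})"

text \<open>Residue Res_x (1+x)^W Y(a,x) b x^(-q) = sum_{j>=0} binom(W,j) a_{j-q} b
  (a finite sum by truncation; we sum over the support).\<close>
definition res_term ::
  "(complex \<Rightarrow> 'v::ab_group_add \<Rightarrow> 'v) \<Rightarrow> ('v \<Rightarrow> int \<Rightarrow> 'v \<Rightarrow> 'v) \<Rightarrow> int \<Rightarrow> int \<Rightarrow> 'v \<Rightarrow> 'v \<Rightarrow> 'v" where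
  "res_term sc Y W q a b =
     (let f = (\<lambda>j::nat. sc ((of_int W :: complex) gchoose j) (Y a (int j - q) b))
      in sum f {j. f j \<noteq> 0})"

definition circ_n ::
  "(complex \<Rightarrow> 'v::ab_group_add \<Rightarrow> 'v) \<Rightarrow> ('v \<Rightarrow> int \<Rightarrow> 'v \<Rightarrow> 'v) \<Rightarrow> nat \<Rightarrow> int \<Rightarrow> 'v \<Rightarrow> 'v \<Rightarrow> 'v" where
  "circ_n sc Y n w a b = res_term sc Y (w + int n) (2 * int n + 2) a b"

definition star_n ::
  "(complex \<Rightarrow> 'v::ab_group_add \<Rightarrow> 'v) \<Rightarrow> ('v \<Rightarrow> int \<Rightarrow> 'v \<Rightarrow> 'v) \<Rightarrow> nat \<Rightarrow> int \<Rightarrow> 'v \<Rightarrow> 'v \<Rightarrow> 'v" where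
  "star_n sc Y n w a b =
     (\<Sum>m\<le>n. sc ((-1) ^ m * of_nat ((m + n) choose n))
                (res_term sc Y (w + int n) (int n + int m + 1) a b))"

definition O_n ::
  "(complex \<Rightarrow> 'v::ab_group_add \<Rightarrow> 'v) \<Rightarrow> ('v \<Rightarrow> int \<Rightarrow> 'v \<Rightarrow> 'v) \<Rightarrow> 'v \<Rightarrow> nat \<Rightarrow> 'v set" where
  "O_n sc Y \<omega> n = module.span sc
     ({Lop Y \<omega> (-1) v + Lop Y \<omega> 0 v | v. True} \<union>
      {circ_n sc Y n w a b | w a b. a \<in> weight_space sc Y \<omega> w})"

definition ops :: "('v \<Rightarrow> int \<Rightarrow> 'v \<Rightarrow> 'v) \<Rightarrow> (nat \<Rightarrow> 'v) \<Rightarrow> (nat \<Rightarrow> int) \<Rightarrow> nat list \<Rightarrow> 'v \<Rightarrow> 'v" where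
  "ops Y us ks is w = foldr (\<lambda>i x. Y (us i) (- ks i) x) is w"

definition Vu :: "(complex \<Rightarrow> 'v::ab_group_add \<Rightarrow> 'v) \<Rightarrow> ('v \<Rightarrow> int \<Rightarrow> 'v \<Rightarrow> 'v) \<Rightarrow> 'v \<Rightarrow> 'v \<Rightarrow> 'v set" where
  "Vu sc Y vac u = module.span sc
     {ops Y (\<lambda>_. u) ks [1..<Suc r] vac | r ks. \<forall>i\<in>{1..r}. ks i \<ge> 1}"

definition F_filt :: "(complex \<Rightarrow> 'v::ab_group_add \<Rightarrow> 'v) \<Rightarrow> ('v \<Rightarrow> int \<Rightarrow> 'v \<Rightarrow> 'v) \<Rightarrow> 'v \<Rightarrow> nat \<Rightarrow> 'v \<Rightarrow> 'v set" where
  "F_filt sc Y u r w = module.span sc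
     {ops Y (\<lambda>_. u) ks [1..<Suc p] w | p ks. p \<le> r \<and> (\<forall>i\<in>{1..p}. ks i \<ge> 1)}"

definition vertex_subalgebra :: "('v \<Rightarrow> int \<Rightarrow> 'v \<Rightarrow> 'v) \<Rightarrow> 'v \<Rightarrow> 'v set \<Rightarrow> bool" where
  "vertex_subalgebra Y vac S \<longleftrightarrow> vac \<in> S \<and> (\<forall>a\<in>S. \<forall>b\<in>S. \<forall>k. Y a k b \<in> S)"

definition permutation_property ::
  "(complex \<Rightarrow> 'v::ab_group_add \<Rightarrow> 'v) \<Rightarrow> ('v \<Rightarrow> int \<Rightarrow> 'v \<Rightarrow> 'v) \<Rightarrow> 'v \<Rightarrow> 'v \<Rightarrow> bool" where
  "permutation_property sc Y vac u \<longleftrightarrow>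
     (\<forall>m::nat. \<forall>\<sigma> us ks w. m \<ge> 1 \<longrightarrow> \<sigma> permutes {1..m} \<longrightarrow>
        (\<forall>i\<in>{1..m}. us i \<in> Vu sc Y vac u) \<longrightarrow> w \<in> Vu sc Y vac u \<longrightarrow>
        ops Y us ks [1..<Suc m] w - ops Y us ks (map \<sigma> [1..<Suc m]) w
          \<in> F_filt sc Y u (m - 1) w)"

fun umon :: "('v \<Rightarrow> int \<Rightarrow> 'v \<Rightarrow> 'v) \<Rightarrow> 'v \<Rightarrow> 'v \<Rightarrow> (nat \<Rightarrow> nat) \<Rightarrow> nat \<Rightarrow> 'v" where
  "umon Y vac u is 0 = vac"
| "umon Y vac u is (Suc j) = (Y u (- int (Suc j)) ^^ is (Suc j)) (umon Y vac u is j)"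

end

theory Submission
  imports Defs
begin

text \<open>Write \<open>p = i_1\<close>, \<open>U = u_{-2n}^{i_{2n}} \<dots> u_{-2}^{i_2} u_{-1}^p 1\<close> and let \<open>v\<close> be \<open>U\<close>
  without the factor \<open>u_{-1}^p\<close>. By the permutation property the modes of \<open>u\<close> commute modulo the filtration \<open>F_r(1)\<close>, and the
  Borcherds identity shows that modulo lower filtration \<open>(u_{-1}^p 1)_q v\<close> is the sum of all
  \<open>u_{-j_1} \<dots> u_{-j_p} v\<close> with \<open>j_1 + \<dots> + j_p = p - q - 1\<close>. In \<open>u_{-1}^p 1 *_n v\<close> the
  composition \<open>(1, \<dots>, 1)\<close> reproduces \<open>U\<close> up to reordering, with coefficient
  \<open>\<Sum>_m (-1)^m C(m+n, n) C(A+n, n+m) = C(A+n, n) \<Sum>_m (-1)^m C(A, m)\<close> for \<open>A = p wt u\<close>,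
  and every other composition has fewer parts equal to 1 and at most one part beyond \<open>2n\<close>, namely
  \<open>2n + 1\<close>.

  Monomials are reduced modulo \<open>O_n(V)\<close> to ordered monomials in \<open>u_{-1}, \<dots>, u_{-2n}\<close>: a mode
  \<open>u_{-K}\<close> with \<open>K \<ge> 2n + 2\<close> is the leading term of \<open>(L(-1)^{K-2n-2} u) \<circ>_n b\<close>, and
  \<open>u_{-2n-1}\<close> is removed with \<open>L(-1) + L(0)\<close>, which raises single modes and so never creates
  new parts equal to 1. This is what keeps the error term \<open>w'\<close> below \<open>U\<close>. The statements on the
  coefficient follow from \<open>\<Sum>_{m \<le> n} (-1)^m C(a, m) = (-1)^n C(a - 1, n)\<close>.\<close>

lemma length_filter_list_update:
  "k < length xs \<Longrightarrow>
   length (filter P (xs[k := v])) + (if P (xs ! k) then 1 else 0) =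
   length (filter P xs) + (if P v then 1 else 0)"
proof (induction xs arbitrary: k)
  case (Cons x xs)
  then show ?case by (cases k) (auto split: if_splits)
qed simp

lemma mset_eq_measures:
  fixes xs ys :: "nat list"
  assumes "mset xs = mset ys"
  shows "length xs = length ys" "sum_list xs = sum_list ys" "length (filter P xs) = length (filter P ys)"
proof -
  show "length xs = length ys" using assms by (rule mset_eq_length)
  show "sum_list xs = sum_list ys" using assms by (metis sum_mset_sum_list)
  show "length (filter P xs) = length (filter P ys)" using assms by (intro mset_eq_length) (simp add: mset_filter)
qed

lemma count_list_replicate_same: "count_list (replicate r x) x = r"
  by (induction r) auto

lemma length_le_sum_list: "\<forall>x\<in>set xs. 1 \<le> x \<Longrightarrow> length xs \<le> sum_list (xs :: nat list)"
  by (induction xs) auto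

lemma sum_list_eq_length_imp_replicate:
  "\<forall>x\<in>set xs. 1 \<le> x \<Longrightarrow> sum_list xs = length xs \<Longrightarrow> xs = replicate (length xs) (1 :: nat)"
proof (induction xs)
  case (Cons x xs)
  then show ?case using length_le_sum_list[of xs] by auto
qed simp

lemma positive_list_cases:
  fixes xs :: "nat list"
  assumes "\<forall>x\<in>set xs. 1 \<le> x"
  obtains "Suc d \<in> set xs" | K where "K \<in> set xs" "d + 2 \<le> K" | "set xs \<subseteq> {1..d}"
proof (cases "Suc d \<in> set xs \<or> (\<exists>K\<in>set xs. d + 2 \<le> K)")
  case False
  have "set xs \<subseteq> {1..d}"
  proof
    fix x assume "x \<in> set xs"
    then have "x \<noteq> Suc d" "\<not> d + 2 \<le> x" "1 \<le> x"
      using False assms by auto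
    then show "x \<in> {1..d}" by simp
  qed
  then show ?thesis using that by blast
qed (use that in blast)

lemma sum_lessThan_eq_prefix:
  fixes M N :: nat
  assumes "M \<le> N" "\<And>i. M \<le> i \<Longrightarrow> i < N \<Longrightarrow> f i = 0"
  shows "(\<Sum>i<N. f i) = (\<Sum>i<M. f i)"
proof (rule sum.mono_neutral_right)
  show "\<forall>i\<in>{..<N} - {..<M}. f i = 0"
  proof
    fix i assume "i \<in> {..<N} - {..<M}"
    then show "f i = 0" by (intro assms(2)) auto
  qed
qed (use assms(1) in auto)

definition canonical_modes :: "(nat \<Rightarrow> nat) \<Rightarrow> nat \<Rightarrow> nat list" where
  "canonical_modes i m = concat (map (\<lambda>j. replicate (i j) j) (rev [1..<Suc m]))"

lemma canonical_modes_0 [simp]: "canonical_modes i 0 = []"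
  by (simp add: canonical_modes_def)

lemma canonical_modes_Suc: "canonical_modes i (Suc m) = replicate (i (Suc m)) (Suc m) @ canonical_modes i m"
  by (simp add: canonical_modes_def)

lemma count_canonical_modes: "count (mset (canonical_modes i m)) x = (if x \<in> {1..m} then i x else 0)"
  by (induction m) (auto simp: canonical_modes_Suc)

lemma mset_canonical_modes: "set xs \<subseteq> {1..m} \<Longrightarrow> mset (canonical_modes (count_list xs) m) = mset xs"
  by (rule multiset_eqI, unfold count_canonical_modes) (auto simp: count_mset count_list_0_iff)

lemma length_canonical_modes: "length (canonical_modes i m) = (\<Sum>j\<in>{1..m}. i j)"
  by (induction m) (auto simp: canonical_modes_Suc)

lemma set_canonical_modes: "set (canonical_modes i m) \<subseteq> {j \<in> {1..m}. 0 < i j}"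
  by (induction m) (auto simp: canonical_modes_Suc)

lemma set_canonical_modes_without_ones: "set (canonical_modes (i(1 := 0)) m) \<subseteq> {2..m}"
proof
  fix y assume "y \<in> set (canonical_modes (i(1 := 0)) m)"
  then have "y \<in> {1..m}" "0 < (i(1 := 0)) y"
    using set_canonical_modes[of "i(1 := 0)" m] by auto
  then show "y \<in> {2..m}" by (cases "y = 1") auto
qed

lemma canonical_modes_Nil_count: "canonical_modes (count_list []) m = []"
  by (induction m) (simp_all add: canonical_modes_Suc)

lemma canonical_modes_split_ones:
  "1 \<le> m \<Longrightarrow> canonical_modes i m = canonical_modes (i(1 := 0)) m @ replicate (i 1) 1"
proof (induction m)
  case (Suc m)
  then show ?case by (cases "m = 0") (simp_all add: canonical_modes_Suc)
qed simp

lemma alternating_trinomial_sum: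
  "(\<Sum>m\<le>n. (-1) ^ m * of_nat ((m + n) choose n) * ((of_int (a + int n) :: 'a :: field_char_0) gchoose (n + m))) =
   (of_int (a + int n) gchoose n) * (\<Sum>m\<le>n. (-1) ^ m * (of_int a gchoose m))"
proof -
  have "of_nat ((m + n) choose n) * ((of_int (a + int n) :: 'a) gchoose (n + m)) =
      (of_int (a + int n) gchoose n) * (of_int a gchoose m)" for m
  proof -
    have "((of_int (a + int n) :: 'a) gchoose (n + m)) * (of_nat (n + m) gchoose n) =
        (of_int (a + int n) gchoose n) * ((of_int (a + int n) - of_nat n) gchoose (n + m - n))"
      by (rule gbinomial_trinomial_revision) simp
    then show ?thesis
      by (simp add: binomial_gbinomial add.commute mult.commute)
  qed
  then show ?thesis
    by (simp add: sum_distrib_left mult.assoc mult.left_commute)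
qed

lemma gbinomial_of_int_eq_0_iff: "((of_int a :: 'a :: field_char_0) gchoose n = 0) \<longleftrightarrow> 0 \<le> a \<and> a < int n"
proof -
  have "((of_int a :: 'a) gchoose n = 0) \<longleftrightarrow> (\<exists>j\<in>{0..<n}. (of_int a :: 'a) = of_nat j)"
    by (auto simp: gbinomial_altdef_of_nat prod_zero_iff)
  also have "\<dots> \<longleftrightarrow> (\<exists>j\<in>{0..<n}. a = int j)"
    by (metis of_int_eq_iff of_int_of_nat_eq)
  also have "\<dots> \<longleftrightarrow> 0 \<le> a \<and> a < int n"
    by (auto intro!: bexI[of _ "nat a"])
  finally show ?thesis .
qed

lemma alternating_gbinomial_partial_sum:
  "(\<Sum>m\<le>n. (-1) ^ m * ((of_int a :: 'a :: field_char_0) gchoose m)) = (-1) ^ n * (of_int (a - 1) gchoose n)"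
  using gbinomial_sum_lower_neg[of "of_int a :: 'a" n] by (simp add: mult.commute)

lemma zhu_coefficient_eq_0_iff:
  "((of_int (a + int n) gchoose n) * (\<Sum>m\<le>n. (-1) ^ m * (of_int a gchoose m)) = (0 :: 'a :: field_char_0)) \<longleftrightarrow>
   0 < \<bar>a\<bar> \<and> \<bar>a\<bar> \<le> int n"
  unfolding alternating_gbinomial_partial_sum mult_eq_0_iff gbinomial_of_int_eq_0_iff by auto

lemma zhu_coefficient_eq:
  "(of_int (a + int n) gchoose n) * (\<Sum>m\<le>n. (-1) ^ m * (of_int a gchoose m)) =
   ((-1) ^ n * (of_int (a + int n) gchoose n) * (of_int (a - 1) gchoose n) :: 'a :: field_char_0)"
  unfolding alternating_gbinomial_partial_sum by (simp add: algebra_simps)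

section \<open>Identities in a vertex operator algebra\<close>

locale voa =
  fixes sc :: "complex \<Rightarrow> 'v::ab_group_add \<Rightarrow> 'v"
    and Y :: "'v \<Rightarrow> int \<Rightarrow> 'v \<Rightarrow> 'v"
    and vac \<omega> :: 'v and c :: complex
  assumes VOA: "is_VOA sc Y vac \<omega> c"
begin

sublocale vector_space sc
  using VOA by (simp add: is_VOA_def)

abbreviation L :: "int \<Rightarrow> 'v \<Rightarrow> 'v" where "L \<equiv> Lop Y \<omega>"

lemma mode_hom: "module_hom sc sc (Y a j)"
  using VOA by (simp add: is_VOA_def linear_iff_module_hom)

lemma mode_hom_left: "module_hom sc sc (\<lambda>a. Y a j b)"
  using VOA by (simp add: is_VOA_def linear_iff_module_hom)

lemmas mode_add = module_hom.add[OF mode_hom]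
lemmas mode_scale = module_hom.scale[OF mode_hom]
lemmas mode_diff = module_hom.diff[OF mode_hom]
lemmas mode_sum = module_hom.sum[OF mode_hom]
lemmas mode_zero [simp] = module_hom.zero[OF mode_hom]
lemmas mode_scale_left = module_hom.scale[OF mode_hom_left]

lemma truncation: "\<exists>N. \<forall>j\<ge>N. Y a j b = 0"
  using VOA by (simp add: is_VOA_def)

lemma vacuum_mode: "Y vac j b = (if j = -1 then b else 0)"
  using VOA by (simp add: is_VOA_def)

lemma creation_vacuum [simp]: "Y a (-1) vac = a"
  using VOA by (simp add: is_VOA_def)

lemma annihilation_vacuum: "0 \<le> j \<Longrightarrow> Y a j vac = 0"
  using VOA by (simp add: is_VOA_def)

lemma borcherds:
  assumes "\<forall>i\<ge>N. Y a (r + int i) b = 0 \<and> Y b (q + int i) x = 0 \<and> Y a (p + int i) x = 0"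
  shows "(\<Sum>i<N. sc (of_int p gchoose i) (Y (Y a (r + int i) b) (p + q - int i) x)) =
    (\<Sum>i<N. sc ((-1) ^ i * (of_int r gchoose i))
       (Y a (p + r - int i) (Y b (q + int i) x) -
        sc ((-1) powi r) (Y b (q + r - int i) (Y a (p + int i) x))))"
  using VOA assms unfolding is_VOA_def by blast

lemma virasoro:
  "L m (L m' v) - L m' (L m v) =
   sc (of_int (m - m')) (L (m + m') v) + sc (if m + m' = 0 then of_int (m ^ 3 - m) / 12 * c else 0) v"
  using VOA unfolding is_VOA_def by blast

lemma L_minus1_derivative: "Y (L (-1) a) j b = sc (- of_int j) (Y a (j - 1) b)"
  using VOA unfolding is_VOA_def by blast

lemma truncation_shifted: "\<exists>N::nat. \<forall>i\<ge>N. Y a (r + int i) b = 0"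
proof -
  obtain N where "\<forall>j\<ge>N. Y a j b = 0" using truncation by blast
  then show ?thesis by (intro exI[of _ "nat (N - r)"]) auto
qed

lemma borcherds_large:
  "\<exists>N0. \<forall>N\<ge>N0.
    (\<Sum>i<N. sc (of_int p gchoose i) (Y (Y a (r + int i) b) (p + q - int i) x)) =
    (\<Sum>i<N. sc ((-1) ^ i * (of_int r gchoose i))
       (Y a (p + r - int i) (Y b (q + int i) x) -
        sc ((-1) powi r) (Y b (q + r - int i) (Y a (p + int i) x))))"
proof -
  obtain N1 N2 N3 :: nat where "\<forall>i\<ge>N1. Y a (r + int i) b = 0" "\<forall>i\<ge>N2. Y b (q + int i) x = 0"
    "\<forall>i\<ge>N3. Y a (p + int i) x = 0"
    using truncation_shifted by metis
  then show ?thesis by (intro exI[of _ "N1 + N2 + N3"] allI impI borcherds) auto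
qed

lemma commutator:
  "Y a (int p) (Y b q x) - Y b q (Y a (int p) x) =
   (\<Sum>i\<le>p. sc (of_nat (p choose i)) (Y (Y a (int i) b) (int p + q - int i) x))"
proof -
  obtain N0 where N0: "\<forall>N\<ge>N0.
    (\<Sum>i<N. sc (of_int (int p) gchoose i) (Y (Y a (0 + int i) b) (int p + q - int i) x)) =
    (\<Sum>i<N. sc ((-1) ^ i * (of_int 0 gchoose i))
       (Y a (int p + 0 - int i) (Y b (q + int i) x) -
        sc ((-1) powi 0) (Y b (q + 0 - int i) (Y a (int p + int i) x))))"
    using borcherds_large by blast
  define N where "N = N0 + Suc p"
  have L: "(\<Sum>i<N. sc (of_int (int p) gchoose i) (Y (Y a (0 + int i) b) (int p + q - int i) x)) =
    (\<Sum>i\<le>p. sc (of_nat (p choose i)) (Y (Y a (int i) b) (int p + q - int i) x))"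
    by (subst sum_lessThan_eq_prefix[of "Suc p"])
      (auto simp: N_def binomial_gbinomial[symmetric] binomial_eq_0 lessThan_Suc_atMost)
  have R: "(\<Sum>i<N. sc ((-1) ^ i * (of_int 0 gchoose i))
       (Y a (int p + 0 - int i) (Y b (q + int i) x) -
        sc ((-1) powi 0) (Y b (q + 0 - int i) (Y a (int p + int i) x)))) =
    Y a (int p) (Y b q x) - Y b q (Y a (int p) x)"
    by (subst sum_lessThan_eq_prefix[of 1]) (auto simp: N_def gbinomial_0_left)
  show ?thesis using L R N0[rule_format, of N] by (simp add: N_def)
qed

lemma normal_ordered_product_mode:
  "\<exists>N0. \<forall>N\<ge>N0. Y (Y a (-1) b) q x =
     (\<Sum>i<N. Y a (- int (Suc i)) (Y b (q + int i) x) + Y b (q - int (Suc i)) (Y a (int i) x))"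
proof -
  obtain N0 where N0: "\<forall>N\<ge>N0.
    (\<Sum>i<N. sc (of_int 0 gchoose i) (Y (Y a (-1 + int i) b) (0 + q - int i) x)) =
    (\<Sum>i<N. sc ((-1) ^ i * (of_int (-1) gchoose i))
       (Y a (0 + (-1) - int i) (Y b (q + int i) x) -
        sc ((-1) powi (-1)) (Y b (q + (-1) - int i) (Y a (0 + int i) x))))"
    using borcherds_large by blast
  have sign: "(-1) ^ i * (of_int (-1) gchoose i) = (1::complex)" for i
  proof -
    have "(of_int (-1) gchoose i :: complex) = (-1) ^ i"
      using gbinomial_minus[of 1 i] by (simp add: binomial_gbinomial[symmetric])
    then show ?thesis by (simp add: minus_one_mult_self)
  qed
  have "Y (Y a (-1) b) q x =
     (\<Sum>i<N. Y a (- int (Suc i)) (Y b (q + int i) x) + Y b (q - int (Suc i)) (Y a (int i) x))"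
    if "N \<ge> Suc N0" for N
  proof -
    have "(\<Sum>i<N. sc (of_int 0 gchoose i) (Y (Y a (-1 + int i) b) (0 + q - int i) x)) = Y (Y a (-1) b) q x"
      by (subst sum_lessThan_eq_prefix[of 1]) (use that in \<open>auto simp: gbinomial_0_left\<close>)
    moreover have "(\<Sum>i<N. sc ((-1) ^ i * (of_int (-1) gchoose i))
       (Y a (0 + (-1) - int i) (Y b (q + int i) x) -
        sc ((-1) powi (-1)) (Y b (q + (-1) - int i) (Y a (0 + int i) x)))) =
      (\<Sum>i<N. Y a (- int (Suc i)) (Y b (q + int i) x) + Y b (q - int (Suc i)) (Y a (int i) x))"
      by (intro sum.cong refl, simp only: sign) (simp add: power_int_minus algebra_simps)
    ultimately show ?thesis using N0 that by simp
  qed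
  then show ?thesis by blast
qed

lemma omega_modes: "Y \<omega> 0 = L (-1)" "Y \<omega> 1 = L 0"
  by (simp_all add: Lop_def)

lemma L_minus1_mode_commutator: "L (-1) (Y a j x) = Y a j (L (-1) x) - sc (of_int j) (Y a (j - 1) x)"
  using commutator[of \<omega> 0 a j x] by (simp add: omega_modes L_minus1_derivative algebra_simps)

lemma L0_mode_commutator:
  assumes "a \<in> weight_space sc Y \<omega> w"
  shows "L 0 (Y a j x) = Y a j (L 0 x) + sc (of_int (w - j - 1)) (Y a j x)"
proof -
  have "L 0 (Y a j x) - Y a j (L 0 x) = Y (L (-1) a) (1 + j) x + Y (L 0 a) j x"
    using commutator[of \<omega> 1 a j x] by (simp add: omega_modes)
  also have "\<dots> = sc (of_int (w - j - 1)) (Y a j x)"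
    using assms by (simp add: weight_space_def L_minus1_derivative mode_scale_left flip: scale_left_distrib)
  finally show ?thesis by (simp add: algebra_simps)
qed

lemma weight_space_L_minus1:
  assumes "a \<in> weight_space sc Y \<omega> w"
  shows "L (-1) a \<in> weight_space sc Y \<omega> (w + 1)"
proof -
  have "L 0 (L (-1) a) = L (-1) (L 0 a) + L (-1) a"
    using virasoro[of 0 "-1" a] by (simp add: algebra_simps)
  also have "\<dots> = sc (of_int (w + 1)) (L (-1) a)"
    using assms by (simp add: weight_space_def Lop_def mode_scale scale_left_distrib)
  finally show ?thesis by (simp add: weight_space_def)
qed

lemma weight_space_L_minus1_power:
  "a \<in> weight_space sc Y \<omega> w \<Longrightarrow> (L (-1) ^^ l) a \<in> weight_space sc Y \<omega> (w + int l)"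
proof (induction l)
  case (Suc l)
  then have "L (-1) ((L (-1) ^^ l) a) \<in> weight_space sc Y \<omega> (w + int l + 1)"
    by (intro weight_space_L_minus1)
  then show ?case by (simp add: ac_simps)
qed simp

lemma mode_L_minus1_power:
  "Y ((L (-1) ^^ l) a) q b = sc (pochhammer (- of_int q) l) (Y a (q - int l) b)"
proof (induction l arbitrary: q)
  case (Suc l)
  then show ?case by (simp add: L_minus1_derivative pochhammer_rec algebra_simps)
qed simp

lemma subspace_unscale: "subspace T \<Longrightarrow> t \<noteq> 0 \<Longrightarrow> sc t x \<in> T \<Longrightarrow> x \<in> T"
  using subspace_scale[of T "sc t x" "inverse t"] by simp

lemma subspace_diff_trans: "subspace T \<Longrightarrow> a - b \<in> T \<Longrightarrow> b - d \<in> T \<Longrightarrow> a - d \<in> T"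
  using subspace_add[of T "a - b" "b - d"] by simp

lemma mode_span_into_subspace:
  assumes "x \<in> span S" "subspace T" "\<And>y. y \<in> S \<Longrightarrow> Y a j y \<in> T"
  shows "Y a j x \<in> T"
proof -
  have "subspace {x. Y a j x \<in> T}"
    using assms(2) by (auto simp: subspace_def mode_add mode_scale)
  then have "span S \<subseteq> {x. Y a j x \<in> T}"
    using assms(3) by (intro span_minimal) auto
  then show ?thesis using assms(1) by blast
qed

lemma res_term_eq_sum:
  assumes "\<forall>j\<ge>J. Y a (int j - q) b = 0"
  shows "res_term sc Y W q a b = (\<Sum>j<J. sc (of_int W gchoose j) (Y a (int j - q) b))"
proof -
  define f where "f j = sc (of_int W gchoose j) (Y a (int j - q) b)" for j
  have "{j. f j \<noteq> 0} \<subseteq> {..<J}"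
    using assms by (auto simp: f_def not_less[symmetric])
  then have "sum f {j. f j \<noteq> 0} = sum f {..<J}"
    by (intro sum.mono_neutral_left) auto
  then show ?thesis unfolding res_term_def Let_def f_def .
qed

lemma res_term_congruence:
  assumes T: "subspace T" and congr: "\<And>j. Y a (int j - q) b - (if j = l then U else 0) \<in> T"
  shows "res_term sc Y W q a b - sc (of_int W gchoose l) U \<in> T"
proof -
  obtain J where J: "\<forall>j\<ge>J. Y a (- q + int j) b = 0" using truncation_shifted by blast
  define N where "N = J + Suc l"
  have "res_term sc Y W q a b = (\<Sum>j<N. sc (of_int W gchoose j) (Y a (int j - q) b))"
    using J by (intro res_term_eq_sum) (simp add: N_def algebra_simps)
  moreover have "sc (of_int W gchoose l) U = (\<Sum>j<N. sc (of_int W gchoose j) (if j = l then U else 0))"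
    by (simp add: N_def if_distrib[of "sc _"] cong: if_cong)
  ultimately have "res_term sc Y W q a b - sc (of_int W gchoose l) U =
      (\<Sum>j<N. sc (of_int W gchoose j) (Y a (int j - q) b - (if j = l then U else 0)))"
    by (simp add: scale_right_diff_distrib sum_subtractf)
  also have "\<dots> \<in> T"
    using T congr by (intro subspace_sum subspace_scale)
  finally show ?thesis .
qed

lemma star_n_congruence:
  assumes T: "subspace T"
    and congr: "\<And>m j. m \<le> n \<Longrightarrow> Y a (int j - (int n + int m + 1)) b - (if j = n + m then U else 0) \<in> T"
  shows "star_n sc Y n w a b -
    sc (\<Sum>m\<le>n. (-1) ^ m * of_nat ((m + n) choose n) * (of_int (w + int n) gchoose (n + m))) U \<in> T"
proof -
  have "star_n sc Y n w a b -
      sc (\<Sum>m\<le>n. (-1) ^ m * of_nat ((m + n) choose n) * (of_int (w + int n) gchoose (n + m))) U =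
    (\<Sum>m\<le>n. sc ((-1) ^ m * of_nat ((m + n) choose n))
       (res_term sc Y (w + int n) (int n + int m + 1) a b - sc (of_int (w + int n) gchoose (n + m)) U))"
    by (simp add: star_n_def scale_right_diff_distrib sum_subtractf scale_sum_left mult.assoc)
  also have "\<dots> \<in> T"
    using T congr by (intro subspace_sum subspace_scale res_term_congruence) auto
  finally show ?thesis .
qed

end

section \<open>Monomials in the modes of a generator\<close>

locale permutation_generator = voa sc Y vac \<omega> c
  for sc :: "complex \<Rightarrow> 'v::ab_group_add \<Rightarrow> 'v" and Y vac \<omega> c +
  fixes u :: 'v and k :: int
  assumes u_weight: "u \<in> weight_space sc Y \<omega> k"
    and permutation: "permutation_property sc Y vac u"
begin

definition modes :: "int list \<Rightarrow> 'v \<Rightarrow> 'v" where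
  "modes zs x = foldr (Y u) zs x"

definition monomial :: "nat list \<Rightarrow> 'v" where
  "monomial xs = modes (map (\<lambda>j. - int j) xs) vac"

lemma modes_Nil [simp]: "modes [] x = x"
  and modes_Cons [simp]: "modes (z # zs) x = Y u z (modes zs x)"
  by (simp_all add: modes_def)

lemma modes_append: "modes (zs @ zs') x = modes zs (modes zs' x)"
  by (simp add: modes_def)

lemma monomial_Nil [simp]: "monomial [] = vac"
  and monomial_Cons [simp]: "monomial (j # xs) = Y u (- int j) (monomial xs)"
  by (simp_all add: monomial_def)

lemma monomial_append: "monomial (xs @ ys) = modes (map (\<lambda>j. - int j) xs) (monomial ys)"
  by (simp add: monomial_def modes_append)

lemma umon_eq_monomial: "umon Y vac u i m = monomial (canonical_modes i m)"
proof (induction m)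
  case (Suc m)
  have "(Y u (- int (Suc m)) ^^ r) (monomial xs) = monomial (replicate r (Suc m) @ xs)" for r xs
    by (induction r) auto
  then show ?case using Suc by (simp add: canonical_modes_Suc)
qed simp

abbreviation F :: "nat \<Rightarrow> 'v set" where
  "F r \<equiv> F_filt sc Y u r vac"

lemma ops_eq_modes: "ops Y (\<lambda>_. u) ks is w = modes (map (\<lambda>i. - ks i) is) w"
  by (induction "is") (simp_all add: ops_def)

lemma F_eq_span_monomials: "F r = span {monomial xs | xs. length xs \<le> r \<and> (\<forall>x\<in>set xs. 1 \<le> x)}"
  unfolding F_filt_def
proof (intro arg_cong[where f = span] set_eqI iffI)
  fix v assume "v \<in> {ops Y (\<lambda>_. u) ks [1..<Suc p] vac | p ks. p \<le> r \<and> (\<forall>i\<in>{1..p}. 1 \<le> ks i)}"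
  then obtain p ks where v: "v = ops Y (\<lambda>_. u) ks [1..<Suc p] vac" and p: "p \<le> r" "\<forall>i\<in>{1..p}. 1 \<le> ks i"
    by blast
  have "map (\<lambda>i. - ks i) [1..<Suc p] = map (\<lambda>j. - int j) (map (\<lambda>i. nat (ks i)) [1..<Suc p])"
    using p(2) by (auto simp: atLeastLessThanSuc_atLeastAtMost simp del: upt_Suc)
  then have "v = monomial (map (\<lambda>i. nat (ks i)) [1..<Suc p])"
    by (simp only: v ops_eq_modes monomial_def)
  with p show "v \<in> {monomial xs | xs. length xs \<le> r \<and> (\<forall>x\<in>set xs. 1 \<le> x)}"
    by (intro CollectI exI[of _ "map (\<lambda>i. nat (ks i)) [1..<Suc p]"])
      (auto simp: atLeastLessThanSuc_atLeastAtMost simp del: upt_Suc)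
next
  fix v assume "v \<in> {monomial xs | xs. length xs \<le> r \<and> (\<forall>x\<in>set xs. 1 \<le> x)}"
  then obtain xs where v: "v = monomial xs" and xs: "length xs \<le> r" "\<forall>x\<in>set xs. 1 \<le> x"
    by blast
  define ks where "ks i = int (xs ! (i - 1))" for i
  have "map (\<lambda>i. - ks i) [1..<Suc (length xs)] = map (\<lambda>j. - int j) xs"
    by (rule nth_equalityI) (simp_all add: ks_def del: upt_Suc)
  then have "v = ops Y (\<lambda>_. u) ks [1..<Suc (length xs)] vac"
    by (simp add: v ops_eq_modes monomial_def)
  moreover have "\<forall>i\<in>{1..length xs}. 1 \<le> ks i"
    using xs(2) by (auto simp: ks_def)
  ultimately show "v \<in> {ops Y (\<lambda>_. u) ks [1..<Suc p] vac | p ks. p \<le> r \<and> (\<forall>i\<in>{1..p}. 1 \<le> ks i)}"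
    using xs(1) by blast
qed

lemma subspace_F: "subspace (F r)"
  by (simp add: F_eq_span_monomials)

lemma monomial_in_F: "length xs \<le> r \<Longrightarrow> \<forall>x\<in>set xs. 1 \<le> x \<Longrightarrow> monomial xs \<in> F r"
  unfolding F_eq_span_monomials by (rule span_base) blast

lemma F_mono: "r \<le> r' \<Longrightarrow> F r \<subseteq> F r'"
  unfolding F_eq_span_monomials by (rule span_mono) auto

lemma vacuum_in_Vu: "vac \<in> Vu sc Y vac u"
  unfolding Vu_def by (rule span_base) (auto intro!: exI[of _ 0] simp: ops_def)

lemma u_in_Vu: "u \<in> Vu sc Y vac u"
  unfolding Vu_def by (rule span_base) (auto intro!: exI[of _ 1] exI[of _ "\<lambda>_. 1"] simp: ops_def)

lemma modes_reorder:
  assumes "zs \<noteq> []" "mset zs' = mset zs"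
  shows "modes zs vac - modes zs' vac \<in> F (length zs - 1)"
proof -
  define m where "m = length zs"
  obtain p where p: "p permutes {..<m}" "permute_list p zs = zs'"
    using mset_eq_permutation[OF assms(2)] m_def by blast
  define ks where "ks i = - zs ! (i - 1)" for i
  define \<sigma> where "\<sigma> i = (if i \<in> {1..m} then Suc (p (i - 1)) else i)" for i
  have "bij_betw (Suc \<circ> p \<circ> (\<lambda>i. i - 1)) {1..m} {1..m}"
  proof (intro bij_betw_trans)
    show "bij_betw (\<lambda>i. i - 1) {1..m} {..<m}"
      by (rule bij_betw_byWitness[where f' = Suc]) auto
    show "bij_betw p {..<m} {..<m}" using p(1) by (rule permutes_imp_bij)
    show "bij_betw Suc {..<m} {1..m}"
      by (simp add: lessThan_atLeast0 atLeastLessThanSuc_atLeastAtMost)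
  qed
  then have "bij_betw \<sigma> {1..m} {1..m}"
    by (rule bij_betw_cong[THEN iffD1, rotated]) (simp add: \<sigma>_def)
  then have "\<sigma> permutes {1..m}"
    by (rule bij_imp_permutes) (auto simp: \<sigma>_def)
  moreover have "1 \<le> m" using assms(1) by (simp add: m_def Suc_le_eq)
  ultimately have "ops Y (\<lambda>_. u) ks [1..<Suc m] vac - ops Y (\<lambda>_. u) ks (map \<sigma> [1..<Suc m]) vac \<in> F (m - 1)"
    using permutation[unfolded permutation_property_def, rule_format, of m \<sigma> "\<lambda>_. u" vac ks]
      u_in_Vu vacuum_in_Vu by blast
  moreover have "map (\<lambda>i. - ks i) [1..<Suc m] = zs"
    by (rule nth_equalityI) (simp_all add: ks_def m_def del: upt_Suc)
  moreover have "map (\<lambda>i. - ks i) (map \<sigma> [1..<Suc m]) = zs'"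
  proof -
    have "[1..<Suc m] = map Suc [0..<m]" by (simp add: map_Suc_upt del: upt_Suc)
    then have "map (\<lambda>i. - ks i) (map \<sigma> [1..<Suc m]) = map (\<lambda>j. zs ! p j) [0..<m]"
      by (simp add: ks_def \<sigma>_def del: upt_Suc)
    then show ?thesis using p(2) by (simp add: permute_list_def m_def)
  qed
  ultimately show ?thesis by (simp add: ops_eq_modes m_def)
qed

lemma monomial_reorder:
  "xs \<noteq> [] \<Longrightarrow> mset ys = mset xs \<Longrightarrow> monomial xs - monomial ys \<in> F (length xs - 1)"
  using modes_reorder[of "map (\<lambda>j. - int j) xs" "map (\<lambda>j. - int j) ys"] by (simp add: monomial_def)

lemma nonneg_mode_monomial:
  assumes "0 \<le> j" "length xs \<le> r"
  shows "Y u j (monomial xs) \<in> F r"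
proof -
  have "modes (j # map (\<lambda>j. - int j) xs) vac - modes (map (\<lambda>j. - int j) xs @ [j]) vac \<in> F (length xs)"
    using modes_reorder[of "j # map (\<lambda>j. - int j) xs"] by simp
  moreover have "modes (map (\<lambda>j. - int j) xs @ [j]) vac = 0"
  proof -
    have "modes zs 0 = 0" for zs by (induction zs) auto
    then show ?thesis using assms(1) by (simp add: modes_append annihilation_vacuum)
  qed
  ultimately show ?thesis
    using F_mono[OF assms(2)] by (auto simp: monomial_def)
qed

lemma nonneg_mode_F:
  assumes "0 \<le> j" "x \<in> F r"
  shows "Y u j x \<in> F r"
proof (rule mode_span_into_subspace[OF _ subspace_F])
  show "x \<in> span {monomial xs | xs. length xs \<le> r \<and> (\<forall>x\<in>set xs. 1 \<le> x)}"
    using assms(2) by (simp add: F_eq_span_monomials)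
  fix y assume "y \<in> {monomial xs | xs. length xs \<le> r \<and> (\<forall>x\<in>set xs. 1 \<le> x)}"
  then show "Y u j y \<in> F r" using assms(1) nonneg_mode_monomial by blast
qed

lemma neg_mode_F:
  assumes "j < 0" "x \<in> F r"
  shows "Y u j x \<in> F (Suc r)"
proof (rule mode_span_into_subspace[OF _ subspace_F])
  show "x \<in> span {monomial xs | xs. length xs \<le> r \<and> (\<forall>x\<in>set xs. 1 \<le> x)}"
    using assms(2) by (simp add: F_eq_span_monomials)
  fix y assume "y \<in> {monomial xs | xs. length xs \<le> r \<and> (\<forall>x\<in>set xs. 1 \<le> x)}"
  then obtain xs where "y = monomial xs" "length xs \<le> r" "\<forall>x\<in>set xs. 1 \<le> x" by blast
  then show "Y u j y \<in> F (Suc r)"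
    using assms(1) monomial_in_F[of "nat (- j) # xs" "Suc r"] by simp
qed

lemma L0_monomial: "L 0 (monomial xs) = sc (of_int (\<Sum>x\<leftarrow>xs. k + int x - 1)) (monomial xs)"
proof (induction xs)
  case Nil
  then show ?case by (simp add: Lop_def annihilation_vacuum)
next
  case (Cons x xs)
  then show ?case
    by (simp add: L0_mode_commutator[OF u_weight] mode_scale scale_left_distrib algebra_simps)
qed

lemma L_minus1_monomial:
  "L (-1) (monomial xs) = (\<Sum>t<length xs. sc (of_nat (xs ! t)) (monomial (xs[t := Suc (xs ! t)])))"
proof (induction xs)
  case Nil
  then show ?case by (simp add: Lop_def annihilation_vacuum)
next
  case (Cons x xs)
  have "- int x - 1 = - int (Suc x)" by simp
  then have "L (-1) (monomial (x # xs)) =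
      Y u (- int x) (L (-1) (monomial xs)) + sc (of_nat x) (monomial (Suc x # xs))"
    by (simp only: L_minus1_mode_commutator monomial_Cons) (simp add: algebra_simps)
  then show ?case
    by (simp add: Cons sum.lessThan_Suc_shift mode_sum mode_scale del: sum.lessThan_Suc)
qed

lemma monomial_minus_canonical:
  assumes "set xs \<subseteq> {1..m}"
  shows "monomial xs - umon Y vac u (count_list xs) m \<in> F (length xs - 1)"
proof (cases "xs = []")
  case True
  then show ?thesis
    using subspace_F subspace_0 by (simp add: umon_eq_monomial canonical_modes_Nil_count)
next
  case False
  then show ?thesis
    using monomial_reorder mset_canonical_modes[OF assms] by (simp add: umon_eq_monomial)
qed

primrec creation_sum :: "nat \<Rightarrow> int \<Rightarrow> 'v \<Rightarrow> 'v" where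
  "creation_sum 0 S x = (if S = 0 then x else 0)"
| "creation_sum (Suc p) S x = (\<Sum>i<nat S. Y u (- int (Suc i)) (creation_sum p (S - int (Suc i)) x))"

lemma creation_sum_below: "S < int p \<Longrightarrow> creation_sum p S x = 0"
  by (induction p arbitrary: S) auto

lemma creation_sum_diagonal: "creation_sum p (int p) x = modes (replicate p (-1)) x"
proof (induction p)
  case (Suc p)
  have "creation_sum (Suc p) (int (Suc p)) x =
      (\<Sum>i<Suc p. Y u (- int (Suc i)) (creation_sum p (int p - int i) x))"
    by (simp only: creation_sum.simps nat_int) (simp del: sum.lessThan_Suc)
  also have "\<dots> = (\<Sum>i<1. Y u (- int (Suc i)) (creation_sum p (int p - int i) x))"
    by (rule sum_lessThan_eq_prefix) (auto simp: creation_sum_below)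
  finally show ?case by (simp add: Suc)
qed simp

lemma creation_sum_Suc_extend:
  "nat S \<le> N \<Longrightarrow>
   creation_sum (Suc p) S x = (\<Sum>i<N. Y u (- int (Suc i)) (creation_sum p (S - int (Suc i)) x))"
  unfolding creation_sum.simps by (rule sum_lessThan_eq_prefix[symmetric]) (auto simp: creation_sum_below)

lemma creation_sum_in_subspace:
  assumes "subspace T"
    and "\<And>xs. length xs = p \<Longrightarrow> \<forall>z\<in>set xs. 1 \<le> z \<Longrightarrow> int (sum_list xs) = S \<Longrightarrow>
      modes (map (\<lambda>j. - int j) xs) x \<in> T"
  shows "creation_sum p S x \<in> T"
  using assms
proof (induction p arbitrary: S T)
  case 0
  then show ?case by (auto simp: subspace_0)
next
  case (Suc p)
  have "creation_sum p (S - int (Suc i)) x \<in> {y. Y u (- int (Suc i)) y \<in> T}" for i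
  proof (rule Suc.IH)
    show "subspace {y. Y u (- int (Suc i)) y \<in> T}"
      using Suc.prems(1) by (auto simp: subspace_def mode_add mode_scale)
    fix xs :: "nat list"
    assume "length xs = p" "\<forall>z\<in>set xs. 1 \<le> z" "int (sum_list xs) = S - int (Suc i)"
    then show "modes (map (\<lambda>j. - int j) xs) x \<in> {y. Y u (- int (Suc i)) y \<in> T}"
      using Suc.prems(2)[of "Suc i # xs"] by simp
  qed
  then show ?case
    using Suc.prems(1) by (auto intro: subspace_sum)
qed

lemma vacuum_power_mode_F:
  "x \<in> F s \<Longrightarrow> Y ((Y u (-1) ^^ p) vac) q x \<in> F (s + p)"
proof (induction p arbitrary: q x s)
  case 0
  then show ?case by (simp add: vacuum_mode subspace_F subspace_0)
next
  case (Suc p)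
  obtain N where "Y ((Y u (-1) ^^ Suc p) vac) q x =
     (\<Sum>i<N. Y u (- int (Suc i)) (Y ((Y u (-1) ^^ p) vac) (q + int i) x) +
             Y ((Y u (-1) ^^ p) vac) (q - int (Suc i)) (Y u (int i) x))"
    using normal_ordered_product_mode by fastforce
  also have "\<dots> \<in> F (s + Suc p)"
  proof (intro subspace_sum[OF subspace_F] subspace_add[OF subspace_F])
    fix i
    show "Y u (- int (Suc i)) (Y ((Y u (-1) ^^ p) vac) (q + int i) x) \<in> F (s + Suc p)"
      using neg_mode_F Suc by simp
    have "Y ((Y u (-1) ^^ p) vac) (q - int (Suc i)) (Y u (int i) x) \<in> F (s + p)"
      using Suc nonneg_mode_F by simp
    then show "Y ((Y u (-1) ^^ p) vac) (q - int (Suc i)) (Y u (int i) x) \<in> F (s + Suc p)"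
      using F_mono[of "s + p" "s + Suc p"] by auto
  qed
  finally show ?case .
qed

lemma vacuum_power_mode_expansion:
  assumes x: "x \<in> F s"
  shows "Y ((Y u (-1) ^^ p) vac) q x - creation_sum p (int p - q - 1) x \<in> F (s + p - 1)"
proof (induction p arbitrary: q)
  case 0
  then show ?case by (simp add: vacuum_mode subspace_F subspace_0)
next
  case (Suc p)
  define B where "B = (Y u (-1) ^^ p) vac"
  define C where "C i = creation_sum p (int p - q - int (Suc i)) x" for i
  obtain N0 where N0: "\<forall>N\<ge>N0. Y (Y u (-1) B) q x =
     (\<Sum>i<N. Y u (- int (Suc i)) (Y B (q + int i) x) + Y B (q - int (Suc i)) (Y u (int i) x))"
    using normal_ordered_product_mode by blast
  define N where "N = N0 + nat (int p - q)"
  have "creation_sum (Suc p) (int p - q) x = (\<Sum>i<N. Y u (- int (Suc i)) (C i))"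
    unfolding C_def N_def by (rule creation_sum_Suc_extend) simp
  moreover have "Y (Y u (-1) B) q x =
     (\<Sum>i<N. Y u (- int (Suc i)) (Y B (q + int i) x) + Y B (q - int (Suc i)) (Y u (int i) x))"
    using N0 by (simp add: N_def)
  ultimately have "Y ((Y u (-1) ^^ Suc p) vac) q x - creation_sum (Suc p) (int (Suc p) - q - 1) x =
     (\<Sum>i<N. Y u (- int (Suc i)) (Y B (q + int i) x - C i)) +
     (\<Sum>i<N. Y B (q - int (Suc i)) (Y u (int i) x))"
    by (simp add: B_def mode_diff sum_subtractf sum.distrib diff_add_eq)
  also have "\<dots> \<in> F (s + Suc p - 1)"
  proof (intro subspace_add[OF subspace_F] subspace_sum[OF subspace_F])
    fix i
    show "Y u (- int (Suc i)) (Y B (q + int i) x - C i) \<in> F (s + Suc p - 1)"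
    proof (cases "p = 0")
      case True
      then have "Y B (q + int i) x - C i = 0"
        by (simp add: B_def C_def vacuum_mode)
      then show ?thesis by (simp add: subspace_0[OF subspace_F])
    next
      case False
      have "Y B (q + int i) x - C i \<in> F (s + p - 1)"
        using Suc.IH[of "q + int i"] by (simp add: B_def C_def algebra_simps)
      then have "Y u (- int (Suc i)) (Y B (q + int i) x - C i) \<in> F (Suc (s + p - 1))"
        by (intro neg_mode_F) simp_all
      then show ?thesis using False by simp
    qed
    show "Y B (q - int (Suc i)) (Y u (int i) x) \<in> F (s + Suc p - 1)"
      using vacuum_power_mode_F nonneg_mode_F x by (simp add: B_def)
  qed
  finally show ?case .
qed

lemma reorder_in_subspace:
  assumes "subspace T" "F (length xs - 1) \<subseteq> T" "mset ys = mset xs" "monomial ys \<in> T"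
  shows "monomial xs \<in> T"
proof (cases "xs = []")
  case False
  then have "monomial xs - monomial ys \<in> T"
    using assms(2,3) monomial_reorder by blast
  then show ?thesis
    using subspace_add[OF assms(1) _ assms(4)] by fastforce
qed (use assms in simp)

end

section \<open>Reduction modulo \<open>O_n(V)\<close>\<close>

locale zhu_level = permutation_generator sc Y vac \<omega> c u k
  for sc :: "complex \<Rightarrow> 'v::ab_group_add \<Rightarrow> 'v" and Y vac \<omega> c u k +
  fixes n :: nat
  assumes n_pos: "1 \<le> n"
begin

abbreviation On :: "'v set" where
  "On \<equiv> O_n sc Y \<omega> n"

lemma L_minus1_plus_L0_in_On: "L (-1) v + L 0 v \<in> On"
  unfolding O_n_def by (rule span_base) blast

lemma circ_n_in_On: "a \<in> weight_space sc Y \<omega> w \<Longrightarrow> circ_n sc Y n w a b \<in> On"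
  unfolding O_n_def by (rule span_base) blast

lemma high_mode_reduction:
  assumes T: "subspace T" "On \<subseteq> T" "F s \<subseteq> T" and b: "b \<in> F s" and K: "2 * n + 2 \<le> K"
    and lower: "\<And>j. 1 \<le> j \<Longrightarrow> j < K \<Longrightarrow> Y u (- int j) b \<in> T"
  shows "Y u (- int K) b \<in> T"
proof -
  define l where "l = K - (2 * n + 2)"
  define a where "a = (L (-1) ^^ l) u"
  define g :: "nat \<Rightarrow> complex"
    where "g j = (of_int (k + int l + int n) gchoose j) * pochhammer (- of_int (int j - (2 * int n + 2))) l"
    for j
  obtain J where J: "\<forall>j\<ge>J. Y a (- (2 * int n + 2) + int j) b = 0"
    using truncation_shifted by blast
  have "circ_n sc Y n (k + int l) a b = (\<Sum>j<Suc (J + K). sc (g j) (Y u (int j - int K) b))"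
  proof -
    have "circ_n sc Y n (k + int l) a b =
        (\<Sum>j<Suc (J + K). sc (of_int (k + int l + int n) gchoose j) (Y a (int j - (2 * int n + 2)) b))"
      unfolding circ_n_def using J by (intro res_term_eq_sum) (simp add: algebra_simps)
    moreover have "int j - (2 * int n + 2) - int l = int j - int K" for j
      using K by (simp add: l_def)
    ultimately show ?thesis
      by (simp add: a_def g_def mode_L_minus1_power)
  qed
  also have "\<dots> = sc (g 0) (Y u (- int K) b) + (\<Sum>j<J + K. sc (g (Suc j)) (Y u (int (Suc j) - int K) b))"
    by (simp only: sum.lessThan_Suc_shift) simp
  finally have circ: "sc (g 0) (Y u (- int K) b) =
      circ_n sc Y n (k + int l) a b - (\<Sum>j<J + K. sc (g (Suc j)) (Y u (int (Suc j) - int K) b))"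
    by (simp add: algebra_simps)
  have "circ_n sc Y n (k + int l) a b \<in> T"
    using T(2) circ_n_in_On weight_space_L_minus1_power[OF u_weight] by (auto simp: a_def)
  moreover have "Y u (int (Suc j) - int K) b \<in> T" for j
  proof (cases "Suc j < K")
    case True
    then show ?thesis using lower[of "K - Suc j"] by (simp add: of_nat_diff)
  next
    case False
    then show ?thesis using T(3) b nonneg_mode_F by auto
  qed
  ultimately have "sc (g 0) (Y u (- int K) b) \<in> T"
    unfolding circ using T(1) by (intro subspace_diff subspace_sum subspace_scale) auto
  moreover have "g 0 = of_nat (pochhammer (2 * n + 2) l)"
    by (simp add: g_def flip: pochhammer_of_nat)
  then have "g 0 \<noteq> 0"
    using pochhammer_pos[of "2 * n + 2" l] by (simp only: of_nat_eq_0_iff) simp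
  ultimately show ?thesis using T(1) subspace_unscale by blast
qed

lemma raised_monomials_congruence:
  assumes T: "subspace T" "F (length rest) \<subseteq> T"
    and raised: "\<And>t. t < length rest \<Longrightarrow> rest ! t \<noteq> d \<Longrightarrow> monomial (d # rest[t := Suc (rest ! t)]) \<in> T"
  shows "(\<Sum>t<length rest. sc (of_nat (rest ! t))
      (monomial (d # rest[t := Suc (rest ! t)]) - (if rest ! t = d then monomial (Suc d # rest) else 0))) \<in> T"
proof (intro subspace_sum[OF T(1)] subspace_scale[OF T(1)])
  fix t assume t: "t \<in> {..<length rest}"
  show "monomial (d # rest[t := Suc (rest ! t)]) - (if rest ! t = d then monomial (Suc d # rest) else 0) \<in> T"
  proof (cases "rest ! t = d")
    case True
    moreover have "d \<in> set rest"
      using True t by (auto simp: in_set_conv_nth)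
    ultimately have "mset (Suc d # rest) = mset (d # rest[t := Suc (rest ! t)])"
      using t by (simp add: mset_update insert_DiffM)
    then have "monomial (d # rest[t := Suc (rest ! t)]) - monomial (Suc d # rest) \<in> F (length rest)"
      using monomial_reorder[of "d # rest[t := Suc (rest ! t)]"] by (simp del: monomial_Cons)
    then show ?thesis using True T(2) by auto
  qed (use raised t in simp)
qed

lemma raise_reduction:
  assumes T: "subspace T" "On \<subseteq> T" "F (length rest) \<subseteq> T" and d: "1 \<le> d"
    and base: "monomial (d # rest) \<in> T"
    and raised: "\<And>t. t < length rest \<Longrightarrow> rest ! t \<noteq> d \<Longrightarrow> monomial (d # rest[t := Suc (rest ! t)]) \<in> T"
  shows "monomial (Suc d # rest) \<in> T"
proof -
  define B where "B = monomial (d # rest)"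
  define M where "M = monomial (Suc d # rest)"
  define R where "R t = monomial (d # rest[t := Suc (rest ! t)])" for t
  define e where "e = (\<Sum>t<length rest. if rest ! t = d then d else 0)"
  have L_minus1: "L (-1) B = sc (of_nat d) M + (\<Sum>t<length rest. sc (of_nat (rest ! t)) (R t))"
    unfolding B_def L_minus1_monomial
    by (simp only: length_Cons sum.lessThan_Suc_shift) (simp add: M_def R_def del: monomial_Cons)
  have "L (-1) B + L 0 B \<in> T"
    using T(2) L_minus1_plus_L0_in_On by blast
  moreover have "L 0 B \<in> T"
    unfolding B_def L0_monomial using T(1) base by (rule subspace_scale)
  ultimately have LB: "L (-1) B \<in> T"
    using T(1) subspace_diff by fastforce
  have "(\<Sum>t<length rest. sc (of_nat (rest ! t)) (if rest ! t = d then M else 0)) =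
      (\<Sum>t<length rest. sc (of_nat (if rest ! t = d then d else 0)) M)"
    by (intro sum.cong) auto
  then have "sc (of_nat (d + e)) M =
      L (-1) B - (\<Sum>t<length rest. sc (of_nat (rest ! t)) (R t - (if rest ! t = d then M else 0)))"
    by (auto simp: L_minus1 e_def scale_sum_left scale_left_distrib scale_right_diff_distrib sum_subtractf)
  also have "\<dots> \<in> T"
    using T(1) LB raised_monomials_congruence[OF T(1,3) raised] unfolding M_def R_def
    by (rule subspace_diff)
  finally have "sc (of_nat (d + e)) M \<in> T" .
  moreover have "of_nat (d + e) \<noteq> (0 :: complex)"
    using d by (simp only: of_nat_eq_0_iff)
  ultimately show ?thesis
    using T(1) subspace_unscale unfolding M_def by blast
qed

definition canonical_upto :: "nat \<Rightarrow> 'v set" where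
  "canonical_upto r = {umon Y vac u i (2 * n) | i. (\<Sum>j\<in>{1..2 * n}. i j) \<le> r}"

lemma umon_count_in_canonical_upto:
  "set xs \<subseteq> {1..2 * n} \<Longrightarrow> length xs \<le> r \<Longrightarrow> umon Y vac u (count_list xs) (2 * n) \<in> canonical_upto r"
  using sum_count_set[of xs "{1..2 * n}"] by (auto simp: canonical_upto_def)

lemma vacuum_in_canonical_upto: "vac \<in> canonical_upto r"
  using umon_count_in_canonical_upto[of "[]" r]
  by (simp add: umon_eq_monomial canonical_modes_Nil_count)

definition high_modes :: "nat list \<Rightarrow> nat" where
  "high_modes xs = length (filter (\<lambda>x. 2 * n < x) xs)"

lemma monomial_with_high_mode:
  assumes T: "subspace T" "On \<subseteq> T" "F (length xs - 1) \<subseteq> T"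
    and xs: "\<forall>x\<in>set xs. 1 \<le> x" "K \<in> set xs" "2 * n + 2 \<le> K"
    and smaller: "\<And>ys. \<forall>y\<in>set ys. 1 \<le> y \<Longrightarrow> length ys = length xs \<Longrightarrow> sum_list ys < sum_list xs \<Longrightarrow>
      monomial ys \<in> T"
  shows "monomial xs \<in> T"
proof -
  define rest where "rest = remove1 K xs"
  have ms: "mset (K # rest) = mset xs"
    using xs(2) by (simp add: rest_def)
  note m = mset_eq_measures[OF ms]
  have rest1: "\<forall>y\<in>set rest. 1 \<le> y"
    using xs(1) set_remove1_subset[of K xs] by (auto simp: rest_def)
  have "Y u (- int K) (monomial rest) \<in> T"
  proof (rule high_mode_reduction[OF T(1,2,3) _ xs(3)])
    show "monomial rest \<in> F (length xs - 1)"
      using m rest1 by (intro monomial_in_F) auto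
    fix j assume "1 \<le> j" "j < K"
    then show "Y u (- int j) (monomial rest) \<in> T"
      using smaller[of "j # rest"] m rest1 by auto
  qed
  then show ?thesis
    using reorder_in_subspace[OF T(1,3) ms] by simp
qed

lemma monomial_with_mode_2n_plus_1:
  assumes T: "subspace T" "On \<subseteq> T" "F (length xs - 1) \<subseteq> T"
    and xs: "\<forall>x\<in>set xs. 1 \<le> x" "Suc (2 * n) \<in> set xs"
    and smaller: "\<And>ys. \<forall>y\<in>set ys. 1 \<le> y \<Longrightarrow> length ys = length xs \<Longrightarrow>
      sum_list ys < sum_list xs \<or> sum_list ys = sum_list xs \<and> high_modes ys < high_modes xs \<Longrightarrow>
      monomial ys \<in> T"
  shows "monomial xs \<in> T"
proof -
  define rest where "rest = remove1 (Suc (2 * n)) xs"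
  have ms: "mset (Suc (2 * n) # rest) = mset xs"
    using xs(2) by (simp add: rest_def)
  note m = mset_eq_measures[OF ms]
  have rest1: "\<forall>y\<in>set rest. 1 \<le> y"
    using xs(1) set_remove1_subset[of "Suc (2 * n)" xs] by (auto simp: rest_def)
  have "monomial (Suc (2 * n) # rest) \<in> T"
  proof (rule raise_reduction[OF T(1,2)])
    show "F (length rest) \<subseteq> T" using T(3) by (simp flip: m(1))
    show "1 \<le> 2 * n" using n_pos by simp
    show "monomial (2 * n # rest) \<in> T"
      using m rest1 n_pos by (intro smaller) auto
    fix t assume t: "t < length rest" "rest ! t \<noteq> 2 * n"
    have "high_modes (rest[t := Suc (rest ! t)]) = high_modes rest"
      using length_filter_list_update[OF t(1), of "\<lambda>x. 2 * n < x" "Suc (rest ! t)"] t(2)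
      by (auto simp: high_modes_def split: if_splits)
    moreover have "\<forall>y\<in>set (2 * n # rest[t := Suc (rest ! t)]). 1 \<le> y"
      using rest1 n_pos set_update_subset_insert[of rest t] by fastforce
    ultimately show "monomial (2 * n # rest[t := Suc (rest ! t)]) \<in> T"
      using m(1,2) m(3)[of "\<lambda>x. 2 * n < x"] t(1)
      by (intro smaller) (auto simp: high_modes_def sum_list_update)
  qed
  then show ?thesis
    using reorder_in_subspace[OF T(1,3) ms] by simp
qed

theorem monomial_in_span_canonical:
  "\<forall>x\<in>set xs. 1 \<le> x \<Longrightarrow> monomial xs \<in> span (On \<union> canonical_upto (length xs))"
proof (induction xs rule: wf_induct[OF wf_measures[of "[length, sum_list, high_modes]"]])
  case (1 xs)
  define T where "T = span (On \<union> canonical_upto (length xs))"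
  have T: "subspace T" "On \<subseteq> T"
    unfolding T_def by (auto intro: span_base)
  have smaller: "monomial ys \<in> T"
    if "\<forall>y\<in>set ys. 1 \<le> y" "length ys = length xs"
      "sum_list ys < sum_list xs \<or> sum_list ys = sum_list xs \<and> high_modes ys < high_modes xs" for ys
    using 1(1) that by (auto simp: T_def)
  have FT: "F (length xs - 1) \<subseteq> T"
    unfolding F_eq_span_monomials
  proof (intro span_minimal[OF _ T(1)] subsetI, clarify)
    fix ys :: "nat list" assume ys: "length ys \<le> length xs - 1" "\<forall>y\<in>set ys. 1 \<le> y"
    show "monomial ys \<in> T"
    proof (cases "ys = []")
      case True
      then show ?thesis using vacuum_in_canonical_upto by (simp add: T_def span_base)
    next
      case False
      then have "length ys < length xs" using ys(1) by (cases ys) auto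
      moreover have "span (On \<union> canonical_upto (length ys)) \<subseteq> T"
        using \<open>length ys < length xs\<close> unfolding T_def canonical_upto_def by (intro span_mono) auto
      ultimately show ?thesis using 1 ys(2) by auto
    qed
  qed
  consider (mode_2n_plus_1) "Suc (2 * n) \<in> set xs"
    | (high) K where "K \<in> set xs" "2 * n + 2 \<le> K" | (low) "set xs \<subseteq> {1..2 * n}"
    by (rule positive_list_cases[OF 1(2)])
  then have "monomial xs \<in> T"
  proof cases
    case mode_2n_plus_1
    then show ?thesis using monomial_with_mode_2n_plus_1[OF T FT 1(2)] smaller by blast
  next
    case high
    then show ?thesis using monomial_with_high_mode[OF T FT 1(2)] smaller by blast
  next
    case low
    then have "monomial xs - umon Y vac u (count_list xs) (2 * n) \<in> T"
      using monomial_minus_canonical FT by auto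
    moreover have "umon Y vac u (count_list xs) (2 * n) \<in> T"
      using low umon_count_in_canonical_upto by (simp add: T_def span_base)
    ultimately show ?thesis
      using subspace_add[OF T(1)] by fastforce
  qed
  then show ?case by (simp add: T_def)
qed

corollary F_subset_span_canonical: "F r \<subseteq> span (On \<union> canonical_upto r)"
  unfolding F_eq_span_monomials
proof (intro span_minimal subsetI, clarify)
  fix xs :: "nat list" assume "length xs \<le> r" "\<forall>x\<in>set xs. 1 \<le> x"
  moreover have "span (On \<union> canonical_upto (length xs)) \<subseteq> span (On \<union> canonical_upto r)"
    using \<open>length xs \<le> r\<close> by (intro span_mono) (auto simp: canonical_upto_def)
  ultimately show "monomial xs \<in> span (On \<union> canonical_upto r)"
    using monomial_in_span_canonical by blast
qed simp

section \<open>The product \<open>u_{-1}^p 1 *_n v\<close>\<close>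

abbreviation deg :: "(nat \<Rightarrow> nat) \<Rightarrow> nat" where
  "deg i \<equiv> \<Sum>j\<in>{1..2 * n}. i j"

definition lower_canonical :: "(nat \<Rightarrow> nat) \<Rightarrow> 'v set" where
  "lower_canonical i = {umon Y vac u i' (2 * n) | i'. deg i' < deg i \<or> (deg i' = deg i \<and> i' 1 < i 1)}"

definition lower_span :: "(nat \<Rightarrow> nat) \<Rightarrow> 'v set" where
  "lower_span i = span (On \<union> lower_canonical i)"

lemma subspace_lower_span: "subspace (lower_span i)"
  by (simp add: lower_span_def)

lemma On_subset_lower_span: "On \<subseteq> lower_span i"
  unfolding lower_span_def by (auto intro: span_base)

lemma ones_le_deg: "i 1 \<le> deg i"
  using n_pos by (intro member_le_sum) auto

lemma F_subset_lower_span: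
  assumes "1 \<le> deg i"
  shows "F (deg i - 1) \<subseteq> lower_span i"
proof -
  have "canonical_upto (deg i - 1) \<subseteq> lower_canonical i"
    using assms by (auto simp: canonical_upto_def lower_canonical_def)
  then have "span (On \<union> canonical_upto (deg i - 1)) \<subseteq> lower_span i"
    unfolding lower_span_def by (intro span_mono) blast
  then show ?thesis using F_subset_span_canonical by blast
qed

lemma monomial_fewer_ones_in_lower_span:
  assumes xs: "set xs \<subseteq> {1..2 * n}" "length xs = deg i" "count_list xs 1 < i 1"
  shows "monomial xs \<in> lower_span i"
proof -
  have "1 \<le> deg i" using xs(3) ones_le_deg[of i] by simp
  then have "monomial xs - umon Y vac u (count_list xs) (2 * n) \<in> lower_span i"
    using monomial_minus_canonical[OF xs(1)] F_subset_lower_span xs(2) by auto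
  moreover have "umon Y vac u (count_list xs) (2 * n) \<in> lower_span i"
    using sum_count_set[of xs "{1..2 * n}"] xs unfolding lower_span_def lower_canonical_def
    by (intro span_base) auto
  ultimately show ?thesis
    using subspace_add[OF subspace_lower_span] by fastforce
qed

lemma monomial_2n_plus_1_ones_in_lower_span:
  assumes p: "1 \<le> i 1" and deg: "length ys + i 1 = deg i" and ys: "set ys \<subseteq> {2..2 * n}"
  shows "monomial (Suc (2 * n) # replicate (i 1 - 1) 1 @ ys) \<in> lower_span i"
proof -
  define zs where "zs = replicate (i 1 - 1) 1 @ ys"
  have zs_set: "set zs \<subseteq> {1..2 * n}"
    using ys n_pos by (auto simp: zs_def)
  have "count_list ys 1 = 0"
    using ys by (auto simp: count_list_0_iff)
  then have zs_ones: "count_list zs 1 = i 1 - 1"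
    by (simp add: zs_def count_list_replicate_same)
  have len_zs: "length zs = deg i - 1"
    using deg p by (simp add: zs_def)
  have "monomial (Suc (2 * n) # zs) \<in> lower_span i"
  proof (rule raise_reduction[OF subspace_lower_span On_subset_lower_span])
    show "F (length zs) \<subseteq> lower_span i"
      using p deg F_subset_lower_span[of i] by (simp add: len_zs)
    show "1 \<le> 2 * n" using n_pos by simp
    show "monomial (2 * n # zs) \<in> lower_span i"
      using zs_set zs_ones len_zs n_pos p deg by (intro monomial_fewer_ones_in_lower_span) auto
    fix t assume t: "t < length zs" "zs ! t \<noteq> 2 * n"
    then have zt: "zs ! t \<in> {1..2 * n}" using zs_set nth_mem by blast
    then have "set (2 * n # zs[t := Suc (zs ! t)]) \<subseteq> {1..2 * n}"
      using t(2) zs_set n_pos set_update_subset_insert[of zs t] by fastforce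
    moreover have "count_list (zs[t := Suc (zs ! t)]) 1 \<le> count_list zs 1"
      using length_filter_list_update[OF t(1), of "(=) 1" "Suc (zs ! t)"] zt
      by (auto simp: count_list_eq_length_filter split: if_splits)
    ultimately show "monomial (2 * n # zs[t := Suc (zs ! t)]) \<in> lower_span i"
      using zs_ones len_zs n_pos p deg by (intro monomial_fewer_ones_in_lower_span) auto
  qed
  then show ?thesis by (simp add: zs_def)
qed

lemma monomial_excess_in_lower_span:
  assumes p: "1 \<le> i 1" and deg: "length ys + i 1 = deg i" and ys: "set ys \<subseteq> {2..2 * n}"
    and xs: "length xs = i 1" "\<forall>x\<in>set xs. 1 \<le> x" "sum_list xs = i 1 + e" and e: "1 \<le> e" "e \<le> 2 * n"
  shows "monomial (xs @ ys) \<in> lower_span i"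
proof (cases "set xs \<subseteq> {1..2 * n}")
  case True
  have "\<exists>x\<in>set xs. x \<noteq> 1"
  proof (rule ccontr)
    assume "\<not> (\<exists>x\<in>set xs. x \<noteq> 1)"
    then have "xs = replicate (length xs) 1"
      by (simp add: replicate_length_same)
    then have "sum_list xs = length xs"
      by (metis mult.right_neutral of_nat_id sum_list_replicate)
    then show False using xs e by simp
  qed
  then have "count_list xs 1 < length xs"
    by (auto simp: count_list_eq_length_filter intro: length_filter_less)
  moreover have "count_list ys 1 = 0"
    using ys by (auto simp: count_list_0_iff)
  ultimately show ?thesis
    using True ys xs(1) deg by (intro monomial_fewer_ones_in_lower_span) auto
next
  case False
  then obtain x where "x \<in> set xs" "x \<notin> {1..2 * n}"
    by blast
  with xs(2) have x: "x \<in> set xs" "2 * n < x"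
    by auto
  define rest where "rest = remove1 x xs"
  have ms: "mset (x # rest) = mset xs"
    using x(1) by (simp add: rest_def)
  have rest1: "\<forall>y\<in>set rest. 1 \<le> y"
    using xs(2) set_remove1_subset[of x xs] by (auto simp: rest_def)
  note m = mset_eq_measures[OF ms]
  have "x = Suc (2 * n)" "sum_list rest = length rest"
    using m x(2) xs e length_le_sum_list[OF rest1] by auto
  moreover have "length rest = i 1 - 1"
    using m(1) xs(1) by simp
  ultimately have "mset (Suc (2 * n) # replicate (i 1 - 1) 1 @ ys) = mset (xs @ ys)"
    using sum_list_eq_length_imp_replicate[OF rest1] ms by (metis append_Cons mset_append)
  moreover have "F (length (xs @ ys) - 1) \<subseteq> lower_span i"
    using p deg xs(1) F_subset_lower_span by (simp add: add.commute)
  ultimately show ?thesis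
    using reorder_in_subspace[OF subspace_lower_span] monomial_2n_plus_1_ones_in_lower_span[OF p deg ys]
    by blast
qed

lemma creation_sum_congruence:
  assumes p: "1 \<le> i 1" and deg: "length ys + i 1 = deg i" and ys: "set ys \<subseteq> {2..2 * n}"
    and l: "l \<le> 2 * n"
  shows "creation_sum (i 1) (int (i 1) + int l - int j) (monomial ys)
    - (if j = l then monomial (ys @ replicate (i 1) 1) else 0) \<in> lower_span i"
proof -
  have FT: "F (deg i - 1) \<subseteq> lower_span i"
    using p deg by (intro F_subset_lower_span) simp
  consider (above) "l < j" | (diag) "j = l" | (below) "j < l" by linarith
  then show ?thesis
  proof cases
    case above
    then show ?thesis
      by (simp add: creation_sum_below subspace_0[OF subspace_lower_span])
  next
    case diag
    have "monomial (ys @ replicate (i 1) 1) - monomial (replicate (i 1) 1 @ ys) \<in> F (deg i - 1)"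
      using monomial_reorder[of "ys @ replicate (i 1) 1" "replicate (i 1) 1 @ ys"] deg p by (simp add: add.commute)
    then have "- (monomial (ys @ replicate (i 1) 1) - monomial (replicate (i 1) 1 @ ys)) \<in> lower_span i"
      using FT subspace_neg[OF subspace_lower_span] by blast
    then show ?thesis
      using diag by (simp add: creation_sum_diagonal monomial_append)
  next
    case below
    have "creation_sum (i 1) (int (i 1 + (l - j))) (monomial ys) \<in> lower_span i"
    proof (rule creation_sum_in_subspace[OF subspace_lower_span])
      fix xs :: "nat list"
      assume "length xs = i 1" "\<forall>z\<in>set xs. 1 \<le> z" "int (sum_list xs) = int (i 1 + (l - j))"
      then show "modes (map (\<lambda>j. - int j) xs) (monomial ys) \<in> lower_span i"
        using monomial_excess_in_lower_span[OF p deg ys, of xs "l - j"] below l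
        by (simp add: monomial_append)
    qed
    then show ?thesis
      using below by (simp add: of_nat_diff algebra_simps)
  qed
qed

lemma vacuum_power_mode_congruence:
  assumes m: "m \<le> n"
  shows "Y ((Y u (-1) ^^ i 1) vac) (int j - (int n + int m + 1)) (umon Y vac u (i(1 := 0)) (2 * n))
      - (if j = n + m then umon Y vac u i (2 * n) else 0) \<in> lower_span i"
proof (cases "i 1 = 0")
  case True
  then have "i(1 := 0) = i" by (simp add: fun_upd_idem)
  then show ?thesis
    using True by (simp add: vacuum_mode subspace_0[OF subspace_lower_span])
next
  case False
  define ys where "ys = canonical_modes (i(1 := 0)) (2 * n)"
  define q where "q = int j - (int n + int m + 1)"
  have canonical_split: "canonical_modes i (2 * n) = ys @ replicate (i 1) 1"
    unfolding ys_def using n_pos by (intro canonical_modes_split_ones) simp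
  have deg: "length ys + i 1 = deg i"
    using length_canonical_modes[of i "2 * n"] by (simp add: canonical_split)
  have ys_set: "set ys \<subseteq> {2..2 * n}"
    unfolding ys_def by (rule set_canonical_modes_without_ones)
  have eq: "int (i 1) - q - 1 = int (i 1) + int (n + m) - int j"
    by (simp add: q_def)
  have "monomial ys \<in> F (length ys)"
    using ys_set by (intro monomial_in_F) auto
  then have "Y ((Y u (-1) ^^ i 1) vac) q (monomial ys)
      - creation_sum (i 1) (int (i 1) - q - 1) (monomial ys) \<in> F (length ys + i 1 - 1)"
    by (rule vacuum_power_mode_expansion)
  then have "Y ((Y u (-1) ^^ i 1) vac) q (monomial ys)
      - creation_sum (i 1) (int (i 1) + int (n + m) - int j) (monomial ys) \<in> F (deg i - 1)"
    by (simp only: eq deg)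
  moreover have "F (deg i - 1) \<subseteq> lower_span i"
    using False deg by (intro F_subset_lower_span) simp
  moreover have "creation_sum (i 1) (int (i 1) + int (n + m) - int j) (monomial ys)
      - (if j = n + m then monomial (ys @ replicate (i 1) 1) else 0) \<in> lower_span i"
    using False deg ys_set m by (intro creation_sum_congruence) auto
  ultimately have main: "Y ((Y u (-1) ^^ i 1) vac) q (monomial ys)
      - (if j = n + m then monomial (ys @ replicate (i 1) 1) else 0) \<in> lower_span i"
    using subspace_diff_trans[OF subspace_lower_span] by blast
  have "umon Y vac u (i(1 := 0)) (2 * n) = monomial ys"
    "umon Y vac u i (2 * n) = monomial (ys @ replicate (i 1) 1)"
    by (simp_all only: umon_eq_monomial ys_def canonical_split)
  then show ?thesis
    using main by (simp only: q_def)
qed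

lemma umon_star_n_congruence:
  "sc ((of_int (int (i 1) * k + int n) gchoose n) * (\<Sum>m\<le>n. (-1) ^ m * (of_int (int (i 1) * k) gchoose m)))
      (umon Y vac u i (2 * n))
   - star_n sc Y n (int (i 1) * k) ((Y u (-1) ^^ i 1) vac) (umon Y vac u (i(1 := 0)) (2 * n))
   \<in> lower_span i"
proof -
  have "star_n sc Y n (int (i 1) * k) ((Y u (-1) ^^ i 1) vac) (umon Y vac u (i(1 := 0)) (2 * n))
      - sc ((of_int (int (i 1) * k + int n) gchoose n) * (\<Sum>m\<le>n. (-1) ^ m * (of_int (int (i 1) * k) gchoose m)))
          (umon Y vac u i (2 * n)) \<in> lower_span i"
    using star_n_congruence[OF subspace_lower_span vacuum_power_mode_congruence]
    by (simp only: alternating_trinomial_sum)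
  then show ?thesis
    using subspace_neg[OF subspace_lower_span] by fastforce
qed

lemma umon_star_n_congruence_mod_On:
  "\<exists>w'\<in>span (lower_canonical i).
     sc ((of_int (int (i 1) * k + int n) gchoose n) * (\<Sum>m\<le>n. (-1) ^ m * (of_int (int (i 1) * k) gchoose m)))
       (umon Y vac u i (2 * n))
     - (star_n sc Y n (int (i 1) * k) ((Y u (-1) ^^ i 1) vac) (umon Y vac u (i(1 := 0)) (2 * n)) + w')
     \<in> On"
proof -
  obtain v w' where "v \<in> span On" "w' \<in> span (lower_canonical i)"
    and decomp: "sc ((of_int (int (i 1) * k + int n) gchoose n) * (\<Sum>m\<le>n. (-1) ^ m * (of_int (int (i 1) * k) gchoose m)))
       (umon Y vac u i (2 * n))
     - star_n sc Y n (int (i 1) * k) ((Y u (-1) ^^ i 1) vac) (umon Y vac u (i(1 := 0)) (2 * n)) = v + w'"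
    using umon_star_n_congruence[of i] unfolding lower_span_def span_Un by blast
  moreover have "v \<in> On"
    using \<open>v \<in> span On\<close> by (simp add: O_n_def span_span)
  ultimately show ?thesis
    by (intro bexI[of _ w']) (simp_all add: diff_diff_eq[symmetric])
qed

end

theorem proposition3p14:
  fixes sc :: "complex \<Rightarrow> 'v::ab_group_add \<Rightarrow> 'v"
    and Y :: "'v \<Rightarrow> int \<Rightarrow> 'v \<Rightarrow> 'v"
    and vac \<omega> u :: 'v and c :: complex and n :: nat and k :: int and i :: "nat \<Rightarrow> nat"
  assumes VOA: "is_VOA sc Y vac \<omega> c"
    and n_pos: "n \<ge> 1"
    and wt_u: "u \<in> weight_space sc Y \<omega> k"
    and wt_bound: "k \<ge> - int n"
    and subalg: "vertex_subalgebra Y vac (Vu sc Y vac u)"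
    and perm: "permutation_property sc Y vac u"
  shows
    "(\<exists>w'\<in>module.span sc
          {umon Y vac u i' (2 * n) | i'.
             (\<Sum>j\<in>{1..2*n}. i' j) < (\<Sum>j\<in>{1..2*n}. i j) \<or>
             ((\<Sum>j\<in>{1..2*n}. i' j) = (\<Sum>j\<in>{1..2*n}. i j) \<and> i' 1 < i 1)}.
        sc ((of_int (int (i 1) * k + int n) gchoose n) *
              (\<Sum>m\<le>n. (-1) ^ m * (of_int (int (i 1) * k) gchoose m)))
            (umon Y vac u i (2 * n))
        - (star_n sc Y n (int (i 1) * k) ((Y u (-1) ^^ i 1) vac) (umon Y vac u (i(1 := 0)) (2 * n))
           + w')
        \<in> O_n sc Y \<omega> n)
   \<and> (((of_int (int (i 1) * k + int n) gchoose n) *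
         (\<Sum>m\<le>n. (-1) ^ m * (of_int (int (i 1) * k) gchoose m)) = (0::complex))
        \<longleftrightarrow> (0 < \<bar>int (i 1) * k\<bar> \<and> \<bar>int (i 1) * k\<bar> \<le> int n))
   \<and> (int (i 1) * k > int n \<longrightarrow>
        (of_int (int (i 1) * k + int n) gchoose n) *
          (\<Sum>m\<le>n. (-1) ^ m * (of_int (int (i 1) * k) gchoose m))
        = ((-1) ^ n * (of_int (int (i 1) * k + int n) gchoose n) *
             (of_int (int (i 1) * k - 1) gchoose n) :: complex))"
proof -
  interpret zhu_level sc Y vac \<omega> c u k n
    by (intro zhu_level.intro permutation_generator.intro voa.intro permutation_generator_axioms.intro
        zhu_level_axioms.intro VOA wt_u perm n_pos)
  show ?thesis
    using umon_star_n_congruence_mod_On[of i] zhu_coefficient_eq_0_iff[of "int (i 1) * k" n]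
      zhu_coefficient_eq[of "int (i 1) * k" n]
    unfolding lower_canonical_def by blast
qed

end
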